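(* Assume vertex labels take values in $\{0,1\}^\ell$. Let $k\ge1$, let $\Omega$ be any collection of functions, let $\varphi\in\mathsf{TL}_k(\Omega)$ with free variables among $x_1,\dots,x_k$, and let $c\in\mathbb R$. Then there is a formula $\tilde\varphi^c$ of $\mathsf C^k_{\infty\omega}$, of quantifier rank at most the summation depth of $\varphi$, such that for every graph $G$ and every $\mathbf v\in V_G^k$: $[\![\varphi]\!]^{\mathbf v}_G=c$ if and only if $\tilde\varphi^c$ is true in $G$ under $x_i\mapsto v_i$. Moreover, if $\varphi\in\mathsf{GTL}_2(\Omega)$ then $\tilde\varphi^c$ can be taken in $\mathsf{GC}_{\infty\omega}$.
   Context: Fix integers $n\ge1$, $\ell\ge1$. A graph is $G=(V_G,E_G,\mathrm{col}_G)$ with $V_G=[n]$, $E_G$ a set of unordered pairs of distinct vertices, and $\mathrm{col}_G:V_G\to\{0,1\}^\ell$. Tensor language: $\Omega$ a collection of functions $f:\mathbb R^p\to\mathbb R$. Expressions $\varphi::=\mathbf 1_{x=y}\mid \mathbf 1_{x\neq y}\mid E(x,y)\mid P_s(x)\mid \varphi\cdot\varphi\mid \varphi+\varphi\mid a\cdot\varphi\mid f(\varphi_1,\dots,\varphi_p)\mid \sum_x\varphi$, usual free variables ($\sum_x$ binds $x$); semantics: $E$ adjacency indicator, $P_s(x)=\mathrm{col}_G(\nu(x))_s$, $\mathbf 1_{x\,\mathrm{op}\,y}$ the (dis)equality indicator, $\cdot,+,a\cdot,f$ pointwise, $[\![\sum_x\varphi]\!]^\nu_G=\sum_{v\in V_G}[\![\varphi]\!]^{\nu[x\mapsto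 v]}_G$. Summation depth: $0$ for atoms, max for $\cdot,+,f(\dots)$, unchanged by $a\cdot$, $+1$ for $\sum_x$. $\mathsf{TL}_k(\Omega)$: expressions using only variables $x_1,\dots,x_k$ (re-binding allowed). Guarded fragment $\mathsf{GTL}_2(\Omega)$: expressions with exactly one free variable ($x_1$ or $x_2$), built from $\mathbf 1_{x_i=x_i}$, $\mathbf 1_{x_i\ne x_i}$, $P_s(x_i)$ by $\cdot$, $+$ of expressions with the same single free variable, $a\cdot$, $f(\varphi_1,\dots,\varphi_p)$ with all $\varphi_j$ sharing the same single free variable, and $\sum_{x_j}(E(x_i,x_j)\cdot\varphi)$ with $\{i,j\}=\{1,2\}$, $\varphi$ with free variable $x_j$. Infinitary counting logic $\mathsf C^k_{\infty\omega}$: formulas over variables $x_1,\dots,x_k$ given by $\varphi::=(x_i=x_j)\mid E(x_i,x_j)\mid P_s(x_i)\mid\neg\varphi\mid\varphi\wedge\varphi\mid\exists^{\ge m}x_i\,\varphi\mid\bigvee_{\alpha\in A}\varphi_\alpha\mid\bigwedge_{\alpha\in A}\varphi_\alpha$ with arbitrary (possibly uncountable) index sets $A$. Truth under a valuation $\mu$: $(x_i=x_j)$ iff $\mu(x_i)=\mu(x_j)$; $E(x_i,x_j)$ iff $\mu(x_i)\mu(x_j)\in E_G$; $P_s(x_i)$ iff $\mathrm{col}_G(\mu(x_i))_s=1$; $\exists^{\ge m}x_i\varphi$ iff at least $m$ vertices $v$ satisfy $\varphi$ under $\mu[x_i\mapsto v]$; infinitary $\bigvee$/$\bigwedge$ as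 some/all. Quantifier rank: nesting depth of counting quantifiers (supremum over infinitary connectives). The guarded fragment $\mathsf{GC}_{\infty\omega}$ (over $x_1,x_2$): equality atoms only of the form $x_i=x_i$; components of $\wedge$, $\bigvee$, $\bigwedge$ have the same single free variable; counting quantifiers only in the forms $\exists^{\ge m}x_2(E(x_1,x_2)\wedge\varphi(x_2))$ or $\exists^{\ge m}x_1(E(x_2,x_1)\wedge\varphi(x_1))$. *)

theory Defs
  imports Main "HOL-Library.Extended_Nat"
begin

text \<open>A graph is given by an edge set E of unordered pairs
(2-element subsets of [n]) and a colouring col, where col v s is the s-th bit
(s in {1..l}) of the label of vertex v in {0,1}^l.\<close>

definition is_graph :: "nat \<Rightarrow> nat set set \<Rightarrow> bool" where
  "is_graph n E \<longleftrightarrow> (\<forall>e\<in>E. \<exists>u v. e = {u, v} \<and> u \<in> {1..n} \<and> v \<in> {1..n} \<and> u \<noteq> v)"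

text \<open>A function f : R^p -> R from Omega is represented by the pair (p, f) with
f :: real list => real (only its values on lists of length p matter).\<close>

datatype tl =
    TEq nat nat
  | TNeq nat nat
  | TE nat nat
  | TP nat nat               \<comment> \<open>P_s(x_i): TP s i\<close>
  | TMul tl tl
  | TAdd tl tl
  | TScal real tl
  | TApp "nat \<times> (real list \<Rightarrow> real)" "tl list"
  | TSum nat tl

primrec tl_sem :: "nat \<Rightarrow> nat set set \<Rightarrow> (nat \<Rightarrow> nat \<Rightarrow> bool) \<Rightarrow> (nat \<Rightarrow> nat) \<Rightarrow> tl \<Rightarrow> real" where
  "tl_sem n E col \<nu> (TEq i j) = (if \<nu> i = \<nu> j then 1 else 0)"
| "tl_sem n E col \<nu> (TNeq i j) = (if \<nu> i \<noteq> \<nu> j then 1 else 0)"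
| "tl_sem n E col \<nu> (TE i j) = (if {\<nu> i, \<nu> j} \<in> E then 1 else 0)"
| "tl_sem n E col \<nu> (TP s i) = (if col (\<nu> i) s then 1 else 0)"
| "tl_sem n E col \<nu> (TMul a b) = tl_sem n E col \<nu> a * tl_sem n E col \<nu> b"
| "tl_sem n E col \<nu> (TAdd a b) = tl_sem n E col \<nu> a + tl_sem n E col \<nu> b"
| "tl_sem n E col \<nu> (TScal r a) = r * tl_sem n E col \<nu> a"
| "tl_sem n E col \<nu> (TApp f args) = snd f (map (tl_sem n E col \<nu>) args)"
| "tl_sem n E col \<nu> (TSum i a) = (\<Sum>v\<in>{1..n}. tl_sem n E col (\<nu>(i := v)) a)"

primrec sdepth :: "tl \<Rightarrow> nat" where
  "sdepth (TEq i j) = 0"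
| "sdepth (TNeq i j) = 0"
| "sdepth (TE i j) = 0"
| "sdepth (TP s i) = 0"
| "sdepth (TMul a b) = max (sdepth a) (sdepth b)"
| "sdepth (TAdd a b) = max (sdepth a) (sdepth b)"
| "sdepth (TScal r a) = sdepth a"
| "sdepth (TApp f args) = fold max (map sdepth args) 0"
| "sdepth (TSum i a) = Suc (sdepth a)"

primrec in_TL :: "nat \<Rightarrow> nat \<Rightarrow> (nat \<times> (real list \<Rightarrow> real)) set \<Rightarrow> tl \<Rightarrow> bool" where
  "in_TL l k \<Omega> (TEq i j) \<longleftrightarrow> i \<in> {1..k} \<and> j \<in> {1..k}"
| "in_TL l k \<Omega> (TNeq i j) \<longleftrightarrow> i \<in> {1..k} \<and> j \<in> {1..k}"
| "in_TL l k \<Omega> (TE i j) \<longleftrightarrow> i \<in> {1..k} \<and> j \<in> {1..k}"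
| "in_TL l k \<Omega> (TP s i) \<longleftrightarrow> s \<in> {1..l} \<and> i \<in> {1..k}"
| "in_TL l k \<Omega> (TMul a b) \<longleftrightarrow> in_TL l k \<Omega> a \<and> in_TL l k \<Omega> b"
| "in_TL l k \<Omega> (TAdd a b) \<longleftrightarrow> in_TL l k \<Omega> a \<and> in_TL l k \<Omega> b"
| "in_TL l k \<Omega> (TScal r a) \<longleftrightarrow> in_TL l k \<Omega> a"
| "in_TL l k \<Omega> (TApp f args) \<longleftrightarrow> f \<in> \<Omega> \<and> length args = fst f \<and> list_all (in_TL l k \<Omega>) args"
| "in_TL l k \<Omega> (TSum i a) \<longleftrightarrow> i \<in> {1..k} \<and> in_TL l k \<Omega> a"

text \<open>Guarded fragment GTL_2(Omega): gtl l Omega i phi means phi is in GTL_2(Omega)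
with single free variable x_i (i in {1,2}).\<close>

inductive gtl :: "nat \<Rightarrow> (nat \<times> (real list \<Rightarrow> real)) set \<Rightarrow> nat \<Rightarrow> tl \<Rightarrow> bool"
  for l :: nat and \<Omega> :: "(nat \<times> (real list \<Rightarrow> real)) set" where
  gtl_eq: "i \<in> {1,2} \<Longrightarrow> gtl l \<Omega> i (TEq i i)"
| gtl_neq: "i \<in> {1,2} \<Longrightarrow> gtl l \<Omega> i (TNeq i i)"
| gtl_P: "i \<in> {1,2} \<Longrightarrow> s \<in> {1..l} \<Longrightarrow> gtl l \<Omega> i (TP s i)"
| gtl_mul: "gtl l \<Omega> i a \<Longrightarrow> gtl l \<Omega> i b \<Longrightarrow> gtl l \<Omega> i (TMul a b)"
| gtl_add: "gtl l \<Omega> i a \<Longrightarrow> gtl l \<Omega> i b \<Longrightarrow> gtl l \<Omega> i (TAdd a b)"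
| gtl_scal: "gtl l \<Omega> i a \<Longrightarrow> gtl l \<Omega> i (TScal r a)"
| gtl_app: "f \<in> \<Omega> \<Longrightarrow> length args = fst f \<Longrightarrow> args \<noteq> [] \<Longrightarrow>
             (\<forall>a\<in>set args. gtl l \<Omega> i a) \<Longrightarrow> gtl l \<Omega> i (TApp f args)"
| gtl_sum: "{i, j} = {1, 2} \<Longrightarrow> gtl l \<Omega> j a \<Longrightarrow> gtl l \<Omega> i (TSum j (TMul (TE i j) a))"

datatype 'i cfml =
    CEq nat nat
  | CE nat nat
  | CP nat nat                        \<comment> \<open>P_s(x_i): CP s i\<close>
  | CNot "'i cfml"
  | CAnd "'i cfml" "'i cfml"
  | CEx nat nat "'i cfml"             \<comment> \<open>CEx m i phi: exists at least m x_i. phi\<close>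
  | CBigOr "'i set" "'i \<Rightarrow> 'i cfml"
  | CBigAnd "'i set" "'i \<Rightarrow> 'i cfml"

primrec holds :: "nat \<Rightarrow> nat set set \<Rightarrow> (nat \<Rightarrow> nat \<Rightarrow> bool) \<Rightarrow> (nat \<Rightarrow> nat) \<Rightarrow> 'i cfml \<Rightarrow> bool" where
  "holds n E col \<mu> (CEq i j) \<longleftrightarrow> \<mu> i = \<mu> j"
| "holds n E col \<mu> (CE i j) \<longleftrightarrow> {\<mu> i, \<mu> j} \<in> E"
| "holds n E col \<mu> (CP s i) \<longleftrightarrow> col (\<mu> i) s"
| "holds n E col \<mu> (CNot a) \<longleftrightarrow> \<not> holds n E col \<mu> a"
| "holds n E col \<mu> (CAnd a b) \<longleftrightarrow> holds n E col \<mu> a \<and> holds n E col \<mu> b"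
| "holds n E col \<mu> (CEx m i a) \<longleftrightarrow> m \<le> card {v \<in> {1..n}. holds n E col (\<mu>(i := v)) a}"
| "holds n E col \<mu> (CBigOr A f) \<longleftrightarrow> (\<exists>x\<in>A. holds n E col \<mu> (f x))"
| "holds n E col \<mu> (CBigAnd A f) \<longleftrightarrow> (\<forall>x\<in>A. holds n E col \<mu> (f x))"

primrec qrank :: "'i cfml \<Rightarrow> enat" where
  "qrank (CEq i j) = 0"
| "qrank (CE i j) = 0"
| "qrank (CP s i) = 0"
| "qrank (CNot a) = qrank a"
| "qrank (CAnd a b) = max (qrank a) (qrank b)"
| "qrank (CEx m i a) = eSuc (qrank a)"
| "qrank (CBigOr A f) = (SUP x\<in>A. qrank (f x))"
| "qrank (CBigAnd A f) = (SUP x\<in>A. qrank (f x))"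

primrec in_C :: "nat \<Rightarrow> nat \<Rightarrow> 'i cfml \<Rightarrow> bool" where
  "in_C l k (CEq i j) \<longleftrightarrow> i \<in> {1..k} \<and> j \<in> {1..k}"
| "in_C l k (CE i j) \<longleftrightarrow> i \<in> {1..k} \<and> j \<in> {1..k}"
| "in_C l k (CP s i) \<longleftrightarrow> s \<in> {1..l} \<and> i \<in> {1..k}"
| "in_C l k (CNot a) \<longleftrightarrow> in_C l k a"
| "in_C l k (CAnd a b) \<longleftrightarrow> in_C l k a \<and> in_C l k b"
| "in_C l k (CEx m i a) \<longleftrightarrow> i \<in> {1..k} \<and> in_C l k a"
| "in_C l k (CBigOr A f) \<longleftrightarrow> (\<forall>x\<in>A. in_C l k (f x))"
| "in_C l k (CBigAnd A f) \<longleftrightarrow> (\<forall>x\<in>A. in_C l k (f x))"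

text \<open>Guarded fragment GC_{infinity omega}: gc l i phi means phi is guarded with single free
variable x_i (i in {1,2}).\<close>

inductive gc :: "nat \<Rightarrow> nat \<Rightarrow> 'i cfml \<Rightarrow> bool" for l :: nat where
  gc_eq: "i \<in> {1,2} \<Longrightarrow> gc l i (CEq i i)"
| gc_P: "i \<in> {1,2} \<Longrightarrow> s \<in> {1..l} \<Longrightarrow> gc l i (CP s i)"
| gc_not: "gc l i a \<Longrightarrow> gc l i (CNot a)"
| gc_and: "gc l i a \<Longrightarrow> gc l i b \<Longrightarrow> gc l i (CAnd a b)"
| gc_or: "i \<in> {1,2} \<Longrightarrow> (\<forall>x\<in>A. gc l i (f x)) \<Longrightarrow> gc l i (CBigOr A f)"
| gc_andb: "i \<in> {1,2} \<Longrightarrow> (\<forall>x\<in>A. gc l i (f x)) \<Longrightarrow> gc l i (CBigAnd A f)"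
| gc_ex: "{i, j} = {1, 2} \<Longrightarrow> gc l j a \<Longrightarrow> gc l i (CEx m j (CAnd (CE i j) a))"

end

theory Submission
  imports Defs "HOL-Library.Multiset" "HOL-Library.Countable_Set"
begin

text \<open>For every real c one builds, by recursion on \<open>\<phi>\<close>, a formula expressing \<open>\<lbrakk>\<phi>\<rbrakk> = c\<close>.
Every expression takes its values in a countable set that does not depend on the graph, so
products, sums, scalings and function applications become countable disjunctions over the
possible values of the subexpressions. A summation \<open>\<Sum>\<^sub>x \<psi>\<close> equals c iff there is a list of
values with sum c in which each value occurs exactly as often as there are x at which \<open>\<psi>\<close>
takes it; this is expressible with counting quantifiers over x, one per summation, which bounds
the quantifier rank by the summation depth. If the summand is guarded by an edge atom, as in
\<open>GTL\<^sub>2\<close>, the counting quantifiers carry the same guard and the formula is guarded.\<close>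

lemma mset_eq_image_mset_iff:
  assumes "finite N"
  shows "mset xs = image_mset f (mset_set N) \<longleftrightarrow>
           (\<forall>x\<in>set xs. count_list xs x = card {u\<in>N. f u = x}) \<and> card N \<le> length xs"
    (is "?eq \<longleftrightarrow> ?counts \<and> ?size")
proof
  assume ?eq
  then show "?counts \<and> ?size"
    using assms by (auto simp flip: count_mset size_mset simp: count_image_mset' conj_commute eq_commute)
next
  assume "?counts \<and> ?size"
  moreover have "count_list xs x \<le> card {u\<in>N. f u = x}" if ?counts for x
    using that by (cases "x \<in> set xs") (auto simp: count_list_0_iff)
  ultimately have "mset xs \<subseteq># image_mset f (mset_set N)" and "card N \<le> length xs"
    using assms by (auto intro!: mset_subset_eqI simp: count_mset count_image_mset' conj_commute eq_commute)
  then show ?eq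
    using mset_subset_size[of "mset xs" "image_mset f (mset_set N)"] assms by (auto simp: subset_mset.le_less)
qed

lemma sum_eq_iff_ex_value_list:
  assumes "finite N" and "f ` N \<subseteq> W"
  shows "sum f N = c \<longleftrightarrow>
           (\<exists>xs\<in>lists W. sum_list xs = c \<and> mset xs = image_mset f (mset_set N))"
proof
  assume "sum f N = c"
  obtain xs where xs: "mset xs = image_mset f (mset_set N)"
    using ex_mset by blast
  then have "xs \<in> lists W"
    using assms by (auto simp flip: set_mset_mset)
  with xs \<open>sum f N = c\<close> show "\<exists>xs\<in>lists W. sum_list xs = c \<and> mset xs = image_mset f (mset_set N)"
    by (metis sum_mset_sum_list sum_unfold_sum_mset)
qed (metis sum_mset_sum_list sum_unfold_sum_mset)

text \<open>Connectives of \<open>nat cfml\<close> are indexed by naturals, so S is enumerated by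
\<open>from_nat_into\<close>; the filter discards the junk value it returns for empty S.\<close>

definition countable_disj :: "'a set \<Rightarrow> ('a \<Rightarrow> nat cfml) \<Rightarrow> nat cfml" where
  "countable_disj S g = CBigOr {m. from_nat_into S m \<in> S} (\<lambda>m. g (from_nat_into S m))"

lemma holds_countable_disj:
  "countable S \<Longrightarrow> holds n E col \<nu> (countable_disj S g) \<longleftrightarrow> (\<exists>x\<in>S. holds n E col \<nu> (g x))"
  unfolding countable_disj_def by (auto dest: from_nat_into_surj)

lemma qrank_countable_disj_le:
  "(\<And>x. x \<in> S \<Longrightarrow> qrank (g x) \<le> d) \<Longrightarrow> qrank (countable_disj S g) \<le> d"
  unfolding countable_disj_def by (auto intro: SUP_least)

lemma in_C_countable_disj: "(\<And>x. x \<in> S \<Longrightarrow> in_C l k (g x)) \<Longrightarrow> in_C l k (countable_disj S g)"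
  unfolding countable_disj_def by auto

lemma gc_countable_disj:
  "i \<in> {1,2} \<Longrightarrow> (\<And>x. x \<in> S \<Longrightarrow> gc l i (g x)) \<Longrightarrow> gc l i (countable_disj S g)"
  unfolding countable_disj_def by (auto intro!: gc_or)

definition CExactly :: "nat \<Rightarrow> nat \<Rightarrow> nat cfml \<Rightarrow> nat cfml" where
  "CExactly m j \<phi> = CAnd (CEx m j \<phi>) (CNot (CEx (Suc m) j \<phi>))"

lemma holds_CExactly:
  "holds n E col \<nu> (CExactly m j \<phi>) \<longleftrightarrow> card {v \<in> {1..n}. holds n E col (\<nu>(j := v)) \<phi>} = m"
  unfolding CExactly_def by auto

text \<open>The last conjunct bounds the number of \<open>x\<^sub>j\<close> satisfying the guard \<open>\<gamma>\<close>, so the listed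
values account for every summand.\<close>

definition CSum_eq :: "nat \<Rightarrow> nat cfml \<Rightarrow> (real \<Rightarrow> nat cfml) \<Rightarrow> real set \<Rightarrow> real \<Rightarrow> nat cfml" where
  "CSum_eq j \<gamma> T W c = countable_disj {xs \<in> lists W. sum_list xs = c}
     (\<lambda>xs. CAnd (CBigAnd {..<length xs} (\<lambda>p. CExactly (count_list xs (xs!p)) j (CAnd \<gamma> (T (xs!p)))))
                (CNot (CEx (Suc (length xs)) j (CAnd \<gamma> (CEq j j)))))"

lemma holds_CSum_eq:
  assumes "countable W"
    and in_W: "\<And>u. u \<in> {1..n} \<Longrightarrow> holds n E col (\<nu>(j := u)) \<gamma> \<Longrightarrow> t u \<in> W"
    and T: "\<And>u y. holds n E col (\<nu>(j := u)) (T y) \<longleftrightarrow> t u = y"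
  shows "holds n E col \<nu> (CSum_eq j \<gamma> T W c) \<longleftrightarrow>
           (\<Sum>u\<in>{1..n}. if holds n E col (\<nu>(j := u)) \<gamma> then t u else 0) = c"
proof -
  define N where "N = {u \<in> {1..n}. holds n E col (\<nu>(j := u)) \<gamma>}"
  have "finite N" "t ` N \<subseteq> W"
    using in_W by (auto simp: N_def)
  have "(\<Sum>u\<in>{1..n}. if holds n E col (\<nu>(j := u)) \<gamma> then t u else 0) = sum t N"
    unfolding N_def by (rule sum.inter_filter[symmetric]) simp
  moreover have "sum t N = c \<longleftrightarrow> (\<exists>xs\<in>lists W. sum_list xs = c \<and>
      (\<forall>x\<in>set xs. count_list xs x = card {u\<in>N. t u = x}) \<and> card N \<le> length xs)"
    by (simp add: sum_eq_iff_ex_value_list[OF \<open>finite N\<close> \<open>t ` N \<subseteq> W\<close>]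
        mset_eq_image_mset_iff[OF \<open>finite N\<close>])
  moreover have "holds n E col \<nu> (CAnd (CBigAnd {..<length xs}
        (\<lambda>p. CExactly (count_list xs (xs!p)) j (CAnd \<gamma> (T (xs!p)))))
        (CNot (CEx (Suc (length xs)) j (CAnd \<gamma> (CEq j j))))) \<longleftrightarrow>
      (\<forall>x\<in>set xs. count_list xs x = card {u\<in>N. t u = x}) \<and> card N \<le> length xs" for xs
  proof -
    have "{u \<in> {1..n}. holds n E col (\<nu>(j := u)) (CAnd \<gamma> (T y))} = {u\<in>N. t u = y}" for y
      by (auto simp: N_def T)
    moreover have "{u \<in> {1..n}. holds n E col (\<nu>(j := u)) (CAnd \<gamma> (CEq j j))} = N"
      by (auto simp: N_def)
    ultimately show ?thesis
      by (auto simp: holds_CExactly all_set_conv_all_nth not_less_eq_eq)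
  qed
  moreover have "countable {xs \<in> lists W. sum_list xs = c}"
    using countable_lists[OF \<open>countable W\<close>] by (rule countable_subset[rotated]) auto
  ultimately show ?thesis
    unfolding CSum_eq_def by (auto simp: holds_countable_disj)
qed

lemma qrank_CSum_eq_le:
  "qrank \<gamma> = 0 \<Longrightarrow> (\<And>y. qrank (T y) \<le> enat d) \<Longrightarrow> qrank (CSum_eq j \<gamma> T W c) \<le> enat (Suc d)"
  unfolding CSum_eq_def CExactly_def
  by (intro qrank_countable_disj_le) (auto intro!: SUP_least simp: eSuc_enat[symmetric] zero_enat_def[symmetric])

lemma in_C_CSum_eq:
  "j \<in> {1..k} \<Longrightarrow> in_C l k \<gamma> \<Longrightarrow> (\<And>y. in_C l k (T y)) \<Longrightarrow> in_C l k (CSum_eq j \<gamma> T W c)"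
  unfolding CSum_eq_def CExactly_def by (intro in_C_countable_disj) auto

lemma gc_CSum_eq:
  "{i, j} = {1, 2} \<Longrightarrow> (\<And>y. gc l j (T y)) \<Longrightarrow> gc l i (CSum_eq j (CE i j) T W c)"
  unfolding CSum_eq_def CExactly_def by (intro gc_countable_disj) (auto intro!: gc.intros)

primrec tl_values :: "tl \<Rightarrow> real set" where
  "tl_values (TEq i j) = {0, 1}"
| "tl_values (TNeq i j) = {0, 1}"
| "tl_values (TE i j) = {0, 1}"
| "tl_values (TP s i) = {0, 1}"
| "tl_values (TMul a b) = (\<lambda>(x, y). x * y) ` (tl_values a \<times> tl_values b)"
| "tl_values (TAdd a b) = (\<lambda>(x, y). x + y) ` (tl_values a \<times> tl_values b)"
| "tl_values (TScal r a) = (\<lambda>x. r * x) ` tl_values a"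
| "tl_values (TApp f args) = snd f ` lists (\<Union> (set (map tl_values args)))"
| "tl_values (TSum i a) = sum_list ` lists (tl_values a)"

lemma countable_tl_values: "countable (tl_values \<phi>)"
  by (induction \<phi>) (auto intro!: countable_image countable_lists countable_UN simp: countable_finite)

lemma tl_sem_in_tl_values: "tl_sem n E col \<nu> \<phi> \<in> tl_values \<phi>"
proof (induction \<phi> arbitrary: \<nu>)
  case (TApp f args)
  then show ?case
    by (force intro!: imageI)
next
  case (TSum i a)
  have "{1..n} = set [1..<Suc n]"
    by auto
  then have "tl_sem n E col \<nu> (TSum i a) = sum_list (map (\<lambda>v. tl_sem n E col (\<nu>(i := v)) a) [1..<Suc n])"
    by (simp only: tl_sem.simps sum_set_upt_conv_sum_list_nat)
  moreover have "map (\<lambda>v. tl_sem n E col (\<nu>(i := v)) a) [1..<Suc n] \<in> lists (tl_values a)"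
    using TSum.IH by auto
  ultimately show ?case
    unfolding tl_values.simps by (rule image_eqI)
qed auto

text \<open>A sum \<open>\<Sum>\<^sub>x\<^sub>j E(x\<^sub>i,x\<^sub>j) \<cdot> \<psi>\<close> is translated with \<open>E(x\<^sub>i,x\<^sub>j)\<close> as the guard of its counting
quantifiers, as \<open>GC\<^sub>\<infinity>\<^sub>\<omega>\<close> requires; other sums get the trivial guard \<open>x\<^sub>j = x\<^sub>j\<close>.\<close>

fun sum_guard :: "nat \<Rightarrow> tl \<Rightarrow> nat cfml" where
  "sum_guard j (TMul (TE i i') a) = CE i i'"
| "sum_guard j b = CEq j j"

fun summand :: "tl \<Rightarrow> tl" where
  "summand (TMul (TE i i') a) = a"
| "summand b = b"

lemma size_summand [termination_simp]: "size (summand b) \<le> size b"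
  by (induction b rule: summand.induct) auto

lemma tl_sem_sum_guard:
  "tl_sem n E col \<nu> b =
     (if holds n E col \<nu> (sum_guard j b) then tl_sem n E col \<nu> (summand b) else 0)"
  by (induction j b rule: sum_guard.induct) auto

text \<open>\<open>CNot (CEq i i)\<close> is falsity, stated in the free variable of the atom so that it stays in
\<open>C\<^sup>k\<close> and in the guarded fragment.\<close>

fun value_formula :: "tl \<Rightarrow> real \<Rightarrow> nat cfml" where
  "value_formula (TEq i j) c = (if c = 1 then CEq i j else if c = 0 then CNot (CEq i j) else CNot (CEq i i))"
| "value_formula (TNeq i j) c = (if c = 1 then CNot (CEq i j) else if c = 0 then CEq i j else CNot (CEq i i))"
| "value_formula (TE i j) c = (if c = 1 then CE i j else if c = 0 then CNot (CE i j) else CNot (CEq i i))"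
| "value_formula (TP s i) c = (if c = 1 then CP s i else if c = 0 then CNot (CP s i) else CNot (CEq i i))"
| "value_formula (TMul a b) c = countable_disj {(x, y) \<in> tl_values a \<times> tl_values b. x * y = c}
      (\<lambda>(x, y). CAnd (value_formula a x) (value_formula b y))"
| "value_formula (TAdd a b) c = countable_disj {(x, y) \<in> tl_values a \<times> tl_values b. x + y = c}
      (\<lambda>(x, y). CAnd (value_formula a x) (value_formula b y))"
| "value_formula (TScal r a) c = countable_disj {x \<in> tl_values a. r * x = c} (value_formula a)"
| "value_formula (TApp f args) c =
     countable_disj {xs \<in> lists (\<Union>a\<in>set args. tl_values a). length xs = length args \<and> snd f xs = c}
      (\<lambda>xs. CBigAnd {..<length args} (\<lambda>p. (map value_formula args ! p) (xs ! p)))"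
| "value_formula (TSum j b) c =
     CSum_eq j (sum_guard j b) (value_formula (summand b)) (tl_values (summand b)) c"

lemma holds_value_formula: "holds n E col \<nu> (value_formula \<phi> c) \<longleftrightarrow> tl_sem n E col \<nu> \<phi> = c"
proof (induction \<phi> c arbitrary: \<nu> rule: value_formula.induct)
  case (5 a b c)
  have "countable {(x, y) \<in> tl_values a \<times> tl_values b. x * y = c}"
    by (rule countable_subset[of _ "tl_values a \<times> tl_values b"]) (auto simp: countable_tl_values)
  then show ?case
    by (auto simp: holds_countable_disj 5 tl_sem_in_tl_values)
next
  case (6 a b c)
  have "countable {(x, y) \<in> tl_values a \<times> tl_values b. x + y = c}"
    by (rule countable_subset[of _ "tl_values a \<times> tl_values b"]) (auto simp: countable_tl_values)
  then show ?case
    by (auto simp: holds_countable_disj 6 tl_sem_in_tl_values)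
next
  case (7 r a c)
  have "countable {x \<in> tl_values a. r * x = c}"
    by (rule countable_subset[of _ "tl_values a"]) (auto simp: countable_tl_values)
  then show ?case
    by (auto simp: holds_countable_disj 7 tl_sem_in_tl_values)
next
  case (8 f args c)
  define W where "W = (\<Union>a\<in>set args. tl_values a)"
  have "countable {xs \<in> lists W. length xs = length args \<and> snd f xs = c}"
    by (rule countable_subset[of _ "lists W"])
      (auto simp: W_def countable_tl_values countable_finite intro!: countable_lists countable_UN)
  then have "holds n E col \<nu> (value_formula (TApp f args) c) \<longleftrightarrow>
      (\<exists>xs\<in>lists W. snd f xs = c \<and>
         length xs = length args \<and> (\<forall>p<length args. tl_sem n E col \<nu> (args ! p) = xs ! p))"
    by (auto simp: W_def holds_countable_disj 8)
  also have "\<dots> \<longleftrightarrow> (\<exists>xs\<in>lists W. snd f xs = c \<and> xs = map (tl_sem n E col \<nu>) args)"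
    by (auto simp: list_eq_iff_nth_eq)
  also have "\<dots> \<longleftrightarrow> tl_sem n E col \<nu> (TApp f args) = c"
    by (force simp: W_def tl_sem_in_tl_values)
  finally show ?case .
next
  case (9 j b c)
  have "holds n E col \<nu> (value_formula (TSum j b) c) \<longleftrightarrow>
      (\<Sum>u\<in>{1..n}. if holds n E col (\<nu>(j := u)) (sum_guard j b)
                    then tl_sem n E col (\<nu>(j := u)) (summand b) else 0) = c"
    unfolding value_formula.simps
    by (rule holds_CSum_eq) (simp_all add: 9 countable_tl_values tl_sem_in_tl_values fun_upd_def)
  also have "\<dots> \<longleftrightarrow> tl_sem n E col \<nu> (TSum j b) = c"
    by (simp flip: tl_sem_sum_guard)
  finally show ?case .
qed auto

lemma sdepth_TApp_ge: "a \<in> set args \<Longrightarrow> sdepth a \<le> sdepth (TApp f args)"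
  by (simp flip: Max.set_eq_fold)

lemma qrank_sum_guard: "qrank (sum_guard j b) = 0"
  by (induction j b rule: sum_guard.induct) auto

lemma sdepth_summand_le: "sdepth (summand b) \<le> sdepth b"
  by (induction b rule: summand.induct) auto

lemma qrank_value_formula_le: "qrank (value_formula \<phi> c) \<le> enat (sdepth \<phi>)"
proof (induction \<phi> c rule: value_formula.induct)
  case (5 a b c)
  have "qrank (value_formula a x) \<le> enat (sdepth (TMul a b))"
    and "qrank (value_formula b y) \<le> enat (sdepth (TMul a b))" for x y
    by (rule order_trans[OF 5(1)] order_trans[OF 5(2)]; simp)+
  then show ?case
    by (auto intro!: qrank_countable_disj_le simp del: sdepth.simps)
next
  case (6 a b c)
  have "qrank (value_formula a x) \<le> enat (sdepth (TAdd a b))"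
    and "qrank (value_formula b y) \<le> enat (sdepth (TAdd a b))" for x y
    by (rule order_trans[OF 6(1)] order_trans[OF 6(2)]; simp)+
  then show ?case
    by (auto intro!: qrank_countable_disj_le simp del: sdepth.simps)
next
  case (7 r a c)
  then show ?case
    by (auto intro!: qrank_countable_disj_le)
next
  case (8 f args c)
  have "qrank (value_formula a x) \<le> enat (sdepth (TApp f args))" if "a \<in> set args" for a x
    using order_trans[OF 8[OF that, of x]] sdepth_TApp_ge[OF that, of f] by simp
  then show ?case
    by (auto intro!: qrank_countable_disj_le SUP_least simp del: sdepth.simps)
next
  case (9 j b c)
  have "qrank (value_formula (summand b) y) \<le> enat (sdepth b)" for y
    using order_trans[OF 9[of y]] sdepth_summand_le[of b] by simp
  then show ?case
    by (auto intro!: qrank_CSum_eq_le qrank_sum_guard)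
qed (simp_all add: zero_enat_def)

lemma in_C_sum_guard_summand:
  "j \<in> {1..k} \<Longrightarrow> in_TL l k \<Omega> b \<Longrightarrow> in_C l k (sum_guard j b) \<and> in_TL l k \<Omega> (summand b)"
  by (induction j b rule: sum_guard.induct) auto

lemma in_C_value_formula: "in_TL l k \<Omega> \<phi> \<Longrightarrow> in_C l k (value_formula \<phi> c)"
proof (induction \<phi> c rule: value_formula.induct)
  case (8 f args c)
  then show ?case
    by (auto intro!: in_C_countable_disj simp: list_all_iff)
next
  case (9 j b c)
  then show ?case
    using in_C_sum_guard_summand[of j k l \<Omega> b] by (auto intro!: in_C_CSum_eq)
qed (auto intro!: in_C_countable_disj)

lemma gtl_free_var: "gtl l \<Omega> i \<phi> \<Longrightarrow> i \<in> {1, 2}"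
  by (induction rule: gtl.induct) (force simp: neq_Nil_conv)+

lemma gc_value_formula: "gtl l \<Omega> i \<phi> \<Longrightarrow> gc l i (value_formula \<phi> c)"
proof (induction arbitrary: c rule: gtl.induct)
  case (gtl_app f args i)
  from \<open>args \<noteq> []\<close> obtain a where "a \<in> set args"
    by (cases args) auto
  with gtl_app have "i \<in> {1, 2}"
    by (blast dest: gtl_free_var)
  with gtl_app show ?case
    by (auto intro!: gc_countable_disj gc.intros)
next
  case (gtl_sum i j a)
  then show ?case
    by (auto intro!: gc_CSum_eq)
qed (auto intro!: gc_countable_disj gc.intros dest: gtl_free_var)

text \<open>The formula is correct for every edge set and valuation.\<close>

theorem mainTheorem14:
  fixes n l k :: nat and \<Omega> :: "(nat \<times> (real list \<Rightarrow> real)) set" and \<phi> :: tl and c :: real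
  assumes "n \<ge> 1" and "l \<ge> 1" and "k \<ge> 1" and "in_TL l k \<Omega> \<phi>"
  shows "(\<exists>\<psi> :: nat cfml. in_C l k \<psi> \<and> qrank \<psi> \<le> enat (sdepth \<phi>) \<and>
            (\<forall>E col v. is_graph n E \<longrightarrow> (\<forall>i\<in>{1..k}. v i \<in> {1..n}) \<longrightarrow>
                (tl_sem n E col v \<phi> = c \<longleftrightarrow> holds n E col v \<psi>)))
       \<and> (\<forall>i. gtl l \<Omega> i \<phi> \<longrightarrow>
            (\<exists>\<psi> :: nat cfml. gc l i \<psi> \<and> in_C l k \<psi> \<and> qrank \<psi> \<le> enat (sdepth \<phi>) \<and>
              (\<forall>E col v. is_graph n E \<longrightarrow> (\<forall>i\<in>{1..k}. v i \<in> {1..n}) \<longrightarrow>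
                (tl_sem n E col v \<phi> = c \<longleftrightarrow> holds n E col v \<psi>))))"
proof -
  let ?\<psi> = "value_formula \<phi> c"
  have in_C: "in_C l k ?\<psi>"
    using assms(4) by (rule in_C_value_formula)
  have qrank: "qrank ?\<psi> \<le> enat (sdepth \<phi>)"
    by (rule qrank_value_formula_le)
  have holds: "tl_sem n E col v \<phi> = c \<longleftrightarrow> holds n E col v ?\<psi>" for E col v
    by (simp add: holds_value_formula)
  show ?thesis
    by (intro conjI allI impI exI[of _ ?\<psi>] in_C qrank holds gc_value_formula)
qed

end
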